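(* Let $\mathsf{L}\in\{\mathsf{CN4K},\mathsf{CN4K}^\pm,\mathsf{CN4K}^\curlyvee,\mathsf{CN4K}^{\Join},\mathsf{CN4K}^1\}$, $\Gamma$ a finite multiset of formulas and $\phi$ a formula. If $\mathsf{L}\models\bigwedge_{\psi\in\Gamma}\psi\to\phi$ (for $\Gamma$ empty: $\mathsf{L}\models\phi$), then the sequent $\Gamma\Rightarrow\phi$ is provable in $\mathcal{G}\mathsf{L}$.
   Context: Fix a countable set $\mathsf{Prop}$ of propositional variables. The language $\mathcal{L}$ is given by the grammar $\phi::=p\mid{\sim}\phi\mid(\phi\wedge\phi)\mid(\phi\vee\phi)\mid(\phi\to\phi)\mid\Box\phi\mid\Diamond\phi$ with $p\in\mathsf{Prop}$. Semantics. A $\mathsf{CN4K}$ frame is $\langle W,\le,R^+_\Box,R^-_\Box,R^+_\Diamond,R^-_\Diamond\rangle$ with $W\ne\varnothing$, $\le$ a preorder on $W$, and four arbitrary binary relations; $R(w)=\{w'\mid wRw'\}$. It is $\pm$-birelational if $R^+_\Box=R^+_\Diamond$ and $R^-_\Box=R^-_\Diamond$; $\curlyvee$-birelational if $R^+_\Box=R^-_\Box$ and $R^+_\Diamond=R^-_\Diamond$; $\Join$-birelational if $R^+_\Box=R^-_\Diamond$ and $R^+_\Diamond=R^-_\Box$; monorelational if all four coincide. A model adds $v^+,v^-:\mathsf{Prop}\to2^W$ upward closed under $\le$. Support: $w\Vdash^\pm p$ iff $w\in v^\pm(p)$; $w\Vdash^+{\sim}\phi$ iff $w\Vdash^-\phi$;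 $w\Vdash^-{\sim}\phi$ iff $w\Vdash^+\phi$; $w\Vdash^+\phi\wedge\chi$ iff both; $w\Vdash^-\phi\wedge\chi$ iff $w\Vdash^-\phi$ or $w\Vdash^-\chi$; $w\Vdash^+\phi\vee\chi$ iff $w\Vdash^+\phi$ or $w\Vdash^+\chi$; $w\Vdash^-\phi\vee\chi$ iff both negatively supported; $w\Vdash^+\phi\to\chi$ iff for all $w'\ge w$, $w'\Vdash^+\phi$ implies $w'\Vdash^+\chi$; $w\Vdash^-\phi\to\chi$ iff $w\Vdash^+\phi$ and $w\Vdash^-\chi$; $w\Vdash^+\Box\phi$ iff $\forall w'\ge w\ \forall w''\in R^+_\Box(w')$: $w''\Vdash^+\phi$; $w\Vdash^-\Box\phi$ iff $\forall w'\ge w\ \exists w''\in R^-_\Box(w')$: $w''\Vdash^-\phi$; $w\Vdash^+\Diamond\phi$ iff $\forall w'\ge w\ \exists w''\in R^+_\Diamond(w')$: $w''\Vdash^+\phi$; $w\Vdash^-\Diamond\phi$ iff $\forall w'\ge w\ \forall w''\in R^-_\Diamond(w')$: $w''\Vdash^-\phi$. $\mathsf{CN4K}$, $\mathsf{CN4K}^\pm$, $\mathsf{CN4K}^\curlyvee$, $\mathsf{CN4K}^{\Join}$, $\mathsf{CN4K}^1$ are the logics of all frames, $\pm$-, $\curlyvee$-, $\Join$-birelational, and monorelational frames, resp.; $\mathsf{L}\models\chi$ means $\mathfrak{M},w\Vdash^+\chi$ for every model $\mathfrak{M}$ on a frame of the class of $\mathsf{L}$ and every state $w$. Sequents. A sequent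 is $\Gamma\Rightarrow\phi$ with $\Gamma$ a finite multiset of formulas and $\phi$ a single formula. $\Gamma^\Box=\{\phi\mid\Box\phi\in\Gamma\}$, $\Gamma^\Diamond_\sim=\{{\sim}\phi\mid{\sim}\Diamond\phi\in\Gamma\}$ (multisets). Rules are written premise(s) / conclusion. Rules of $\mathcal{G}\mathsf{N4}$: axioms $p,\Gamma\Rightarrow p$ and ${\sim}p,\Gamma\Rightarrow{\sim}p$ ($p\in\mathsf{Prop}$); ${\sim}{\sim}_l$: $\phi,\Gamma\Rightarrow\psi$ / ${\sim}{\sim}\phi,\Gamma\Rightarrow\psi$; ${\sim}{\sim}_r$: $\Gamma\Rightarrow\phi$ / $\Gamma\Rightarrow{\sim}{\sim}\phi$; $\wedge_l$: $\phi,\chi,\Gamma\Rightarrow\psi$ / $\phi\wedge\chi,\Gamma\Rightarrow\psi$; $\wedge_r$: $\Gamma\Rightarrow\phi$ and $\Gamma\Rightarrow\chi$ / $\Gamma\Rightarrow\phi\wedge\chi$; $\vee_l$: $\phi,\Gamma\Rightarrow\psi$ and $\chi,\Gamma\Rightarrow\psi$ / $\phi\vee\chi,\Gamma\Rightarrow\psi$; $\vee_{r_1}$: $\Gamma\Rightarrow\phi$ / $\Gamma\Rightarrow\phi\vee\chi$; $\vee_{r_2}$: $\Gamma\Rightarrow\chi$ / $\Gamma\Rightarrow\phi\vee\chi$; ${\sim}\vee_l$: ${\sim}\phi,{\sim}\chi,\Gamma\Rightarrow\psi$ / ${\sim}(\phi\vee\chi),\Gamma\Rightarrow\psi$; ${\sim}\vee_r$: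 $\Gamma\Rightarrow{\sim}\phi$ and $\Gamma\Rightarrow{\sim}\chi$ / $\Gamma\Rightarrow{\sim}(\phi\vee\chi)$; ${\sim}\wedge_l$: ${\sim}\phi,\Gamma\Rightarrow\psi$ and ${\sim}\chi,\Gamma\Rightarrow\psi$ / ${\sim}(\phi\wedge\chi),\Gamma\Rightarrow\psi$; ${\sim}\wedge_{r_1}$: $\Gamma\Rightarrow{\sim}\phi$ / $\Gamma\Rightarrow{\sim}(\phi\wedge\chi)$; ${\sim}\wedge_{r_2}$: $\Gamma\Rightarrow{\sim}\chi$ / $\Gamma\Rightarrow{\sim}(\phi\wedge\chi)$; $\to_l$: $\phi\to\chi,\Gamma\Rightarrow\phi$ and $\chi,\Gamma\Rightarrow\psi$ / $\phi\to\chi,\Gamma\Rightarrow\psi$; $\to_r$: $\Gamma,\phi\Rightarrow\chi$ / $\Gamma\Rightarrow\phi\to\chi$; ${\sim}\!\to_l$: $\phi,{\sim}\chi,\Gamma\Rightarrow\psi$ / ${\sim}(\phi\to\chi),\Gamma\Rightarrow\psi$; ${\sim}\!\to_r$: $\Gamma\Rightarrow\phi$ and $\Gamma\Rightarrow{\sim}\chi$ / $\Gamma\Rightarrow{\sim}(\phi\to\chi)$. Modal rules: $\Box$: $\Gamma^\Box\Rightarrow\chi$ / $\Gamma\Rightarrow\Box\chi$; $\Diamond$: $\phi\Rightarrow\chi$ / $\Gamma,\Diamond\phi\Rightarrow\Diamond\chi$; $\Box_\sim$: ${\sim}\phi\Rightarrow{\sim}\chi$ / $\Gamma,{\sim}\Box\phi\Rightarrow{\sim}\Box\chi$;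 $\Diamond_\sim$: $\Gamma^\Diamond_\sim\Rightarrow{\sim}\chi$ / $\Gamma\Rightarrow{\sim}\Diamond\chi$; $\Diamond^\pm$: $\Gamma^\Box,\phi\Rightarrow\chi$ / $\Gamma,\Diamond\phi\Rightarrow\Diamond\chi$; $\Box^\pm_\sim$: $\Gamma^\Diamond_\sim,{\sim}\phi\Rightarrow{\sim}\chi$ / $\Gamma,{\sim}\Box\phi\Rightarrow{\sim}\Box\chi$; $\Diamond^\curlyvee$: $\Gamma^\Diamond_\sim,\phi\Rightarrow\chi$ / $\Gamma,\Diamond\phi\Rightarrow\Diamond\chi$; $\Box^\curlyvee_\sim$: $\Gamma^\Box,{\sim}\phi\Rightarrow{\sim}\chi$ / $\Gamma,{\sim}\Box\phi\Rightarrow{\sim}\Box\chi$; $\Box^{\Join}$: $\Gamma^\Box,\Gamma^\Diamond_\sim\Rightarrow\chi$ / $\Gamma\Rightarrow\Box\chi$; $\Diamond^{\Join}$: ${\sim}\phi\Rightarrow\chi$ / $\Gamma,{\sim}\Box\phi\Rightarrow\Diamond\chi$; $\Box^{\Join}_\sim$: $\phi\Rightarrow{\sim}\chi$ / $\Gamma,\Diamond\phi\Rightarrow{\sim}\Box\chi$; $\Diamond^{\Join}_\sim$: $\Gamma^\Box,\Gamma^\Diamond_\sim\Rightarrow{\sim}\chi$ / $\Gamma\Rightarrow{\sim}\Diamond\chi$; $\Diamond^1$: $\Gamma^\Box,\Gamma^\Diamond_\sim,\phi\Rightarrow\chi$ / $\Gamma,\Diamond\phi\Rightarrow\Diamond\chi$;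 $\Box^1_\sim$: $\Gamma^\Box,\Gamma^\Diamond_\sim,{\sim}\phi\Rightarrow{\sim}\chi$ / $\Gamma,{\sim}\Box\phi\Rightarrow{\sim}\Box\chi$; $\Diamond^{1,\Join}$: $\Gamma^\Box,\Gamma^\Diamond_\sim,{\sim}\phi\Rightarrow\chi$ / $\Gamma,{\sim}\Box\phi\Rightarrow\Diamond\chi$; $\Box^{1,\Join}_\sim$: $\Gamma^\Box,\Gamma^\Diamond_\sim,\phi\Rightarrow{\sim}\chi$ / $\Gamma,\Diamond\phi\Rightarrow{\sim}\Box\chi$. Calculi: $\mathcal{G}\mathsf{CN4K}=\mathcal{G}\mathsf{N4}+\{\Box,\Diamond,\Box_\sim,\Diamond_\sim\}$; $\mathcal{G}\mathsf{CN4K}^\curlyvee=\mathcal{G}\mathsf{N4}+\{\Box,\Diamond^\curlyvee,\Box^\curlyvee_\sim,\Diamond_\sim\}$; $\mathcal{G}\mathsf{CN4K}^\pm=\mathcal{G}\mathsf{N4}+\{\Box,\Diamond^\pm,\Box^\pm_\sim,\Diamond_\sim\}$; $\mathcal{G}\mathsf{CN4K}^{\Join}=\mathcal{G}\mathsf{N4}+\{\Box^{\Join},\Diamond,\Diamond^{\Join},\Box_\sim,\Box^{\Join}_\sim,\Diamond^{\Join}_\sim\}$; $\mathcal{G}\mathsf{CN4K}^1=\mathcal{G}\mathsf{N4}+\{\Box^{\Join},\Diamond^1,\Diamond^{1,\Join},\Box^1_\sim,\Box^{1,\Join}_\sim,\Diamond^{\Join}_\sim\}$. A proof is a finite tree of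 sequents, each node obtained from its children by a rule, whose leaves are axioms. *)

theory Defs
  imports Main "HOL-Library.Multiset"
begin

datatype fm =
    Atom nat
  | Neg fm          (* strong negation ~ *)
  | And fm fm
  | Or fm fm
  | Imp fm fm
  | Box fm
  | Dia fm

record 'w frame =
  W   :: "'w set"
  le  :: "'w \<Rightarrow> 'w \<Rightarrow> bool"
  RBp :: "'w \<Rightarrow> 'w \<Rightarrow> bool"
  RBm :: "'w \<Rightarrow> 'w \<Rightarrow> bool"
  RDp :: "'w \<Rightarrow> 'w \<Rightarrow> bool"
  RDm :: "'w \<Rightarrow> 'w \<Rightarrow> bool"

record 'w model = "'w frame" +
  vp :: "nat \<Rightarrow> 'w set"
  vm :: "nat \<Rightarrow> 'w set"

definition is_frame :: "('w, 'b) frame_scheme \<Rightarrow> bool" where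
  "is_frame F \<longleftrightarrow> W F \<noteq> {}
     \<and> (\<forall>w\<in>W F. le F w w)
     \<and> (\<forall>u\<in>W F. \<forall>v\<in>W F. \<forall>x\<in>W F. le F u v \<longrightarrow> le F v x \<longrightarrow> le F u x)
     \<and> (\<forall>u v. (le F u v \<or> RBp F u v \<or> RBm F u v \<or> RDp F u v \<or> RDm F u v)
              \<longrightarrow> u \<in> W F \<and> v \<in> W F)"

definition is_model :: "'w model \<Rightarrow> bool" where
  "is_model M \<longleftrightarrow> is_frame M
     \<and> (\<forall>p. vp M p \<subseteq> W M \<and> vm M p \<subseteq> W M)
     \<and> (\<forall>p u v. le M u v \<longrightarrow> (u \<in> vp M p \<longrightarrow> v \<in> vp M p) \<and> (u \<in> vm M p \<longrightarrow> v \<in> vm M p))"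

text \<open>Positive (True) and negative (False) support.\<close>

fun sat :: "'w model \<Rightarrow> bool \<Rightarrow> 'w \<Rightarrow> fm \<Rightarrow> bool" where
  "sat M True w (Atom p) = (w \<in> vp M p)"
| "sat M False w (Atom p) = (w \<in> vm M p)"
| "sat M True w (Neg a) = sat M False w a"
| "sat M False w (Neg a) = sat M True w a"
| "sat M True w (And a b) = (sat M True w a \<and> sat M True w b)"
| "sat M False w (And a b) = (sat M False w a \<or> sat M False w b)"
| "sat M True w (Or a b) = (sat M True w a \<or> sat M True w b)"
| "sat M False w (Or a b) = (sat M False w a \<and> sat M False w b)"
| "sat M True w (Imp a b) =
     (\<forall>w'\<in>W M. le M w w' \<longrightarrow> sat M True w' a \<longrightarrow> sat M True w' b)"
| "sat M False w (Imp a b) = (sat M True w a \<and> sat M False w b)"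
| "sat M True w (Box a) =
     (\<forall>w'\<in>W M. le M w w' \<longrightarrow> (\<forall>w''\<in>W M. RBp M w' w'' \<longrightarrow> sat M True w'' a))"
| "sat M False w (Box a) =
     (\<forall>w'\<in>W M. le M w w' \<longrightarrow> (\<exists>w''\<in>W M. RBm M w' w'' \<and> sat M False w'' a))"
| "sat M True w (Dia a) =
     (\<forall>w'\<in>W M. le M w w' \<longrightarrow> (\<exists>w''\<in>W M. RDp M w' w'' \<and> sat M True w'' a))"
| "sat M False w (Dia a) =
     (\<forall>w'\<in>W M. le M w w' \<longrightarrow> (\<forall>w''\<in>W M. RDm M w' w'' \<longrightarrow> sat M False w'' a))"

datatype logic = CN4K | CN4Kpm | CN4Kvee | CN4Kbowtie | CN4K1

definition in_class :: "logic \<Rightarrow> ('w, 'b) frame_scheme \<Rightarrow> bool" where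
  "in_class L F = (case L of
      CN4K \<Rightarrow> True
    | CN4Kpm \<Rightarrow> RBp F = RDp F \<and> RBm F = RDm F
    | CN4Kvee \<Rightarrow> RBp F = RBm F \<and> RDp F = RDm F
    | CN4Kbowtie \<Rightarrow> RBp F = RDm F \<and> RDp F = RBm F
    | CN4K1 \<Rightarrow> RBp F = RBm F \<and> RBm F = RDp F \<and> RDp F = RDm F)"

text \<open>Worlds are drawn from the ambient type fm set set (every frame of
  cardinality at most 2^(2^aleph0), in particular the canonical model, is
  isomorphic to one carried by a subset of this type).\<close>

definition valid :: "logic \<Rightarrow> fm \<Rightarrow> bool" where
  "valid L \<phi> \<longleftrightarrow> (\<forall>M :: fm set set model. is_model M \<and> in_class L M \<longrightarrow>
                     (\<forall>w\<in>W M. sat M True w \<phi>))"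

fun conjs :: "fm list \<Rightarrow> fm" where
  "conjs [] = Imp (Atom 0) (Atom 0)"
| "conjs [a] = a"
| "conjs (a # b # xs) = And a (conjs (b # xs))"

definition seq_fm :: "fm list \<Rightarrow> fm \<Rightarrow> fm" where
  "seq_fm xs \<phi> = (if xs = [] then \<phi> else Imp (conjs xs) \<phi>)"

fun isBox :: "fm \<Rightarrow> bool" where
  "isBox (Box _) = True" | "isBox _ = False"
fun unBox :: "fm \<Rightarrow> fm" where
  "unBox (Box a) = a" | "unBox a = a"
fun isNegDia :: "fm \<Rightarrow> bool" where
  "isNegDia (Neg (Dia _)) = True" | "isNegDia _ = False"
fun unNegDia :: "fm \<Rightarrow> fm" where
  "unNegDia (Neg (Dia a)) = Neg a" | "unNegDia a = a"

definition boxes :: "fm multiset \<Rightarrow> fm multiset" where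
  "boxes \<Gamma> = image_mset unBox (filter_mset isBox \<Gamma>)"
definition negdias :: "fm multiset \<Rightarrow> fm multiset" where
  "negdias \<Gamma> = image_mset unNegDia (filter_mset isNegDia \<Gamma>)"

inductive der :: "logic \<Rightarrow> fm multiset \<Rightarrow> fm \<Rightarrow> bool" for L where
  ax:  "der L (add_mset (Atom p) \<Gamma>) (Atom p)"
| axn: "der L (add_mset (Neg (Atom p)) \<Gamma>) (Neg (Atom p))"
| nnl: "der L (add_mset a \<Gamma>) c \<Longrightarrow> der L (add_mset (Neg (Neg a)) \<Gamma>) c"
| nnr: "der L \<Gamma> a \<Longrightarrow> der L \<Gamma> (Neg (Neg a))"
| andl: "der L (add_mset a (add_mset b \<Gamma>)) c \<Longrightarrow> der L (add_mset (And a b) \<Gamma>) c"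
| andr: "der L \<Gamma> a \<Longrightarrow> der L \<Gamma> b \<Longrightarrow> der L \<Gamma> (And a b)"
| orl: "der L (add_mset a \<Gamma>) c \<Longrightarrow> der L (add_mset b \<Gamma>) c \<Longrightarrow> der L (add_mset (Or a b) \<Gamma>) c"
| orr1: "der L \<Gamma> a \<Longrightarrow> der L \<Gamma> (Or a b)"
| orr2: "der L \<Gamma> b \<Longrightarrow> der L \<Gamma> (Or a b)"
| norl: "der L (add_mset (Neg a) (add_mset (Neg b) \<Gamma>)) c \<Longrightarrow> der L (add_mset (Neg (Or a b)) \<Gamma>) c"
| norr: "der L \<Gamma> (Neg a) \<Longrightarrow> der L \<Gamma> (Neg b) \<Longrightarrow> der L \<Gamma> (Neg (Or a b))"
| nandl: "der L (add_mset (Neg a) \<Gamma>) c \<Longrightarrow> der L (add_mset (Neg b) \<Gamma>) c \<Longrightarrow> der L (add_mset (Neg (And a b)) \<Gamma>) c"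
| nandr1: "der L \<Gamma> (Neg a) \<Longrightarrow> der L \<Gamma> (Neg (And a b))"
| nandr2: "der L \<Gamma> (Neg b) \<Longrightarrow> der L \<Gamma> (Neg (And a b))"
| impl: "der L (add_mset (Imp a b) \<Gamma>) a \<Longrightarrow> der L (add_mset b \<Gamma>) c \<Longrightarrow> der L (add_mset (Imp a b) \<Gamma>) c"
| impr: "der L (add_mset a \<Gamma>) b \<Longrightarrow> der L \<Gamma> (Imp a b)"
| nimpl: "der L (add_mset a (add_mset (Neg b) \<Gamma>)) c \<Longrightarrow> der L (add_mset (Neg (Imp a b)) \<Gamma>) c"
| nimpr: "der L \<Gamma> a \<Longrightarrow> der L \<Gamma> (Neg b) \<Longrightarrow> der L \<Gamma> (Neg (Imp a b))"
| box: "L \<in> {CN4K, CN4Kvee, CN4Kpm} \<Longrightarrow> der L (boxes \<Gamma>) c \<Longrightarrow> der L \<Gamma> (Box c)"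
| dia_ns: "L \<in> {CN4K, CN4Kvee, CN4Kpm} \<Longrightarrow> der L (negdias \<Gamma>) (Neg c) \<Longrightarrow> der L \<Gamma> (Neg (Dia c))"
| dia: "L \<in> {CN4K, CN4Kbowtie} \<Longrightarrow> der L {#a#} c \<Longrightarrow> der L (add_mset (Dia a) \<Gamma>) (Dia c)"
| box_ns: "L \<in> {CN4K, CN4Kbowtie} \<Longrightarrow> der L {#Neg a#} (Neg c) \<Longrightarrow> der L (add_mset (Neg (Box a)) \<Gamma>) (Neg (Box c))"
| dia_vee: "L = CN4Kvee \<Longrightarrow> der L (add_mset a (negdias \<Gamma>)) c \<Longrightarrow> der L (add_mset (Dia a) \<Gamma>) (Dia c)"
| box_ns_vee: "L = CN4Kvee \<Longrightarrow> der L (add_mset (Neg a) (boxes \<Gamma>)) (Neg c) \<Longrightarrow> der L (add_mset (Neg (Box a)) \<Gamma>) (Neg (Box c))"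
| dia_pm: "L = CN4Kpm \<Longrightarrow> der L (add_mset a (boxes \<Gamma>)) c \<Longrightarrow> der L (add_mset (Dia a) \<Gamma>) (Dia c)"
| box_ns_pm: "L = CN4Kpm \<Longrightarrow> der L (add_mset (Neg a) (negdias \<Gamma>)) (Neg c) \<Longrightarrow> der L (add_mset (Neg (Box a)) \<Gamma>) (Neg (Box c))"
| box_bt: "L \<in> {CN4Kbowtie, CN4K1} \<Longrightarrow> der L (boxes \<Gamma> + negdias \<Gamma>) c \<Longrightarrow> der L \<Gamma> (Box c)"
| dia_ns_bt: "L \<in> {CN4Kbowtie, CN4K1} \<Longrightarrow> der L (boxes \<Gamma> + negdias \<Gamma>) (Neg c) \<Longrightarrow> der L \<Gamma> (Neg (Dia c))"
| dia_bt: "L = CN4Kbowtie \<Longrightarrow> der L {#Neg a#} c \<Longrightarrow> der L (add_mset (Neg (Box a)) \<Gamma>) (Dia c)"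
| box_ns_bt: "L = CN4Kbowtie \<Longrightarrow> der L {#a#} (Neg c) \<Longrightarrow> der L (add_mset (Dia a) \<Gamma>) (Neg (Box c))"
| dia_1: "L = CN4K1 \<Longrightarrow> der L (add_mset a (boxes \<Gamma> + negdias \<Gamma>)) c \<Longrightarrow> der L (add_mset (Dia a) \<Gamma>) (Dia c)"
| box_ns_1: "L = CN4K1 \<Longrightarrow> der L (add_mset (Neg a) (boxes \<Gamma> + negdias \<Gamma>)) (Neg c) \<Longrightarrow> der L (add_mset (Neg (Box a)) \<Gamma>) (Neg (Box c))"
| dia_1bt: "L = CN4K1 \<Longrightarrow> der L (add_mset (Neg a) (boxes \<Gamma> + negdias \<Gamma>)) c \<Longrightarrow> der L (add_mset (Neg (Box a)) \<Gamma>) (Dia c)"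
| box_ns_1bt: "L = CN4K1 \<Longrightarrow> der L (add_mset a (boxes \<Gamma> + negdias \<Gamma>)) (Neg c) \<Longrightarrow> der L (add_mset (Dia a) \<Gamma>) (Neg (Box c))"

end

theory Submission
  imports Defs
begin

(* Completeness is proved with a canonical model built from cut-free derivability. As cut is
   not available, the truth lemma is two-sided: membership in a world's theory forces support,
   and underivability from it excludes support. A world is a theory that is maximal among those
   not deriving some formula (or the set of all formulas), together with at most one refuted
   possibility formula whose refutation its successors must witness; the four accessibility
   relations are identified as the frame class demands. Passing between the multisets of the
   calculus and the sets of the canonical model needs contraction, which is admissible by
   height-preserving invertibility of the non-modal left rules. *)

section \<open>A uniform presentation of the rules\<close>

fun is_literal :: "fm \<Rightarrow> bool" where
  "is_literal (Atom p) = True"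
| "is_literal (Neg (Atom p)) = True"
| "is_literal _ = False"

(* left_prems x: the premises of the left rule for x, as the formulas each adds to the context.
   right_prems \<phi>: the alternative right rules for \<phi>, each given by its premises
   (added context, succedent). The left rule for Imp keeps its principal formula and is
   treated separately. *)

fun left_prems :: "fm \<Rightarrow> fm multiset list" where
  "left_prems (Neg (Neg a)) = [{#a#}]"
| "left_prems (And a b) = [{#a, b#}]"
| "left_prems (Or a b) = [{#a#}, {#b#}]"
| "left_prems (Neg (Or a b)) = [{#Neg a, Neg b#}]"
| "left_prems (Neg (And a b)) = [{#Neg a#}, {#Neg b#}]"
| "left_prems (Neg (Imp a b)) = [{#a, Neg b#}]"
| "left_prems _ = []"

fun right_prems :: "fm \<Rightarrow> (fm multiset \<times> fm) list list" where
  "right_prems (Neg (Neg a)) = [[({#}, a)]]"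
| "right_prems (And a b) = [[({#}, a), ({#}, b)]]"
| "right_prems (Or a b) = [[({#}, a)], [({#}, b)]]"
| "right_prems (Neg (Or a b)) = [[({#}, Neg a), ({#}, Neg b)]]"
| "right_prems (Neg (And a b)) = [[({#}, Neg a)], [({#}, Neg b)]]"
| "right_prems (Imp a b) = [[({#a#}, b)]]"
| "right_prems (Neg (Imp a b)) = [[({#}, a), ({#}, Neg b)]]"
| "right_prems _ = []"

datatype modal_rel = Box_pos | Box_neg | Dia_pos | Dia_neg

(* rel_rep L r is the representative of the relation r among those that frames of class L
   identify; the canonical model has one relation per representative. *)

fun rel_rep :: "logic \<Rightarrow> modal_rel \<Rightarrow> modal_rel" where
  "rel_rep CN4K r = r"
| "rel_rep CN4Kpm r = (case r of Dia_pos \<Rightarrow> Box_pos | Dia_neg \<Rightarrow> Box_neg | _ \<Rightarrow> r)"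
| "rel_rep CN4Kvee r = (case r of Box_neg \<Rightarrow> Box_pos | Dia_neg \<Rightarrow> Dia_pos | _ \<Rightarrow> r)"
| "rel_rep CN4Kbowtie r = (case r of Dia_neg \<Rightarrow> Box_pos | Box_neg \<Rightarrow> Dia_pos | _ \<Rightarrow> r)"
| "rel_rep CN4K1 r = Box_pos"

(* A necessity formula (Box a, Neg (Dia a)) passes its body to every k-successor, a possibility
   formula (Dia a, Neg (Box a)) needs a k-successor supporting its body. In these terms all
   modal rules of the five calculi take the two shapes der_nec_rule and der_poss_rule. *)

fun nec_body :: "logic \<Rightarrow> modal_rel \<Rightarrow> fm \<Rightarrow> fm multiset" where
  "nec_body L k (Box a) = (if rel_rep L Box_pos = k then {#a#} else {#})"
| "nec_body L k (Neg (Dia a)) = (if rel_rep L Dia_neg = k then {#Neg a#} else {#})"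
| "nec_body L k _ = {#}"

fun poss_body :: "logic \<Rightarrow> modal_rel \<Rightarrow> fm \<Rightarrow> fm multiset" where
  "poss_body L k (Dia a) = (if rel_rep L Dia_pos = k then {#a#} else {#})"
| "poss_body L k (Neg (Box a)) = (if rel_rep L Box_neg = k then {#Neg a#} else {#})"
| "poss_body L k _ = {#}"

lemma mem_nec_body:
  "\<psi> \<in># nec_body L k x \<longleftrightarrow>
    x = Box \<psi> \<and> k = rel_rep L Box_pos \<or> (\<exists>a. x = Neg (Dia a) \<and> \<psi> = Neg a \<and> k = rel_rep L Dia_neg)"
  by (cases "(L, k, x)" rule: nec_body.cases) auto

lemma mem_poss_body:
  "\<psi> \<in># poss_body L k x \<longleftrightarrow>
    x = Dia \<psi> \<and> k = rel_rep L Dia_pos \<or> (\<exists>a. x = Neg (Box a) \<and> \<psi> = Neg a \<and> k = rel_rep L Box_neg)"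
  by (cases "(L, k, x)" rule: poss_body.cases) auto

lemma poss_body_nec_body_empty: "d \<in># poss_body L k x \<Longrightarrow> nec_body L k' x = {#}"
  by (auto simp: mem_poss_body)

lemma poss_body_unique: "e \<in># poss_body L k \<chi> \<Longrightarrow> e' \<in># poss_body L k \<chi> \<Longrightarrow> e = e'"
  by (auto simp: mem_poss_body)

definition succ_ctx :: "logic \<Rightarrow> modal_rel \<Rightarrow> fm multiset \<Rightarrow> fm multiset" where
  "succ_ctx L k \<Gamma> = (\<Sum>x\<in>#\<Gamma>. nec_body L k x)"

lemma succ_ctx_simps [simp]:
  "succ_ctx L k {#} = {#}"
  "succ_ctx L k (add_mset x \<Gamma>) = nec_body L k x + succ_ctx L k \<Gamma>"
  "succ_ctx L k (\<Gamma> + \<Delta>) = succ_ctx L k \<Gamma> + succ_ctx L k \<Delta>"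
  by (simp_all add: succ_ctx_def)

lemma set_succ_ctx: "set_mset (succ_ctx L k \<Gamma>) = {\<psi>. \<exists>x\<in>#\<Gamma>. \<psi> \<in># nec_body L k x}"
  by (auto simp: succ_ctx_def)

lemma set_succ_ctx_mono:
  "set_mset \<Gamma> \<subseteq> set_mset \<Delta> \<Longrightarrow> set_mset (succ_ctx L k \<Gamma>) \<subseteq> set_mset (succ_ctx L k \<Delta>)"
  by (auto simp: set_succ_ctx)

lemma succ_ctx_diff_nonnec:
  assumes "nec_body L k x = {#}"
  shows "succ_ctx L k (\<Gamma> - {#x#}) = succ_ctx L k \<Gamma>"
proof (cases "x \<in># \<Gamma>")
  case True
  then obtain \<Gamma>' where "\<Gamma> = add_mset x \<Gamma>'" by (blast dest: multi_member_split)
  with assms show ?thesis by simp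
qed simp

lemma succ_ctx_eq:
  "succ_ctx L k \<Gamma> = (if rel_rep L Box_pos = k then boxes \<Gamma> else {#})
     + (if rel_rep L Dia_neg = k then negdias \<Gamma> else {#})"
proof (induction \<Gamma>)
  case (add x \<Gamma>)
  then show ?case
    by (cases "(L, k, x)" rule: nec_body.cases) (auto simp: boxes_def negdias_def)
qed (simp add: boxes_def negdias_def)

lemma der_literal: "is_literal \<phi> \<Longrightarrow> \<phi> \<in># \<Gamma> \<Longrightarrow> der L \<Gamma> \<phi>"
  by (cases \<phi> rule: is_literal.cases) (auto dest!: multi_member_split intro: der.ax der.axn)

lemma der_left_rule:
  "left_prems x \<noteq> [] \<Longrightarrow> \<forall>M\<in>set (left_prems x). der L (M + \<Gamma>) \<phi> \<Longrightarrow> der L (add_mset x \<Gamma>) \<phi>"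
  by (cases x rule: left_prems.cases)
    (auto intro: der.nnl der.andl der.orl der.norl der.nandl der.nimpl)

lemma der_right_rule:
  "ps \<in> set (right_prems \<phi>) \<Longrightarrow> \<forall>(M, \<psi>)\<in>set ps. der L (M + \<Gamma>) \<psi> \<Longrightarrow> der L \<Gamma> \<phi>"
  by (cases \<phi> rule: right_prems.cases)
    (auto intro: der.nnr der.andr der.orr1 der.orr2 der.norr der.nandr1 der.nandr2 der.impr der.nimpr)

lemma der_nec_rule:
  "\<psi> \<in># nec_body L k \<phi> \<Longrightarrow> der L (succ_ctx L k \<Gamma>) \<psi> \<Longrightarrow> der L \<Gamma> \<phi>"
  by (cases L) (auto simp: mem_nec_body succ_ctx_eq intro: der.box der.box_bt der.dia_ns der.dia_ns_bt)

lemma der_poss_rule: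
  "d \<in># poss_body L k x \<Longrightarrow> \<psi> \<in># poss_body L k \<phi> \<Longrightarrow>
    der L (add_mset d (succ_ctx L k \<Gamma>)) \<psi> \<Longrightarrow> der L (add_mset x \<Gamma>) \<phi>"
  by (cases L) (auto simp: mem_poss_body succ_ctx_eq
      intro: der.dia der.box_ns der.dia_vee der.box_ns_vee der.dia_pm der.box_ns_pm
        der.dia_bt der.box_ns_bt der.dia_1 der.box_ns_1 der.dia_1bt der.box_ns_1bt)

section \<open>Admissibility of weakening and contraction\<close>

(* The calculus der with its rules in the uniform shapes above, indexed by a bound n on the
   height of derivations. *)

inductive derh :: "logic \<Rightarrow> nat \<Rightarrow> fm multiset \<Rightarrow> fm \<Rightarrow> bool" for L where
  literal: "is_literal \<phi> \<Longrightarrow> \<phi> \<in># \<Gamma> \<Longrightarrow> derh L n \<Gamma> \<phi>"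
| left: "left_prems x \<noteq> [] \<Longrightarrow> \<forall>M\<in>set (left_prems x). derh L n (M + \<Gamma>) \<phi> \<Longrightarrow>
    derh L (Suc n) (add_mset x \<Gamma>) \<phi>"
| imp_left: "derh L n (add_mset (Imp a b) \<Gamma>) a \<Longrightarrow> derh L n (add_mset b \<Gamma>) \<phi> \<Longrightarrow>
    derh L (Suc n) (add_mset (Imp a b) \<Gamma>) \<phi>"
| right: "ps \<in> set (right_prems \<phi>) \<Longrightarrow> \<forall>(M, \<psi>)\<in>set ps. derh L n (M + \<Gamma>) \<psi> \<Longrightarrow>
    derh L (Suc n) \<Gamma> \<phi>"
| nec: "\<psi> \<in># nec_body L k \<phi> \<Longrightarrow> derh L n (succ_ctx L k \<Gamma>) \<psi> \<Longrightarrow> derh L (Suc n) \<Gamma> \<phi>"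
| poss: "d \<in># poss_body L k x \<Longrightarrow> \<psi> \<in># poss_body L k \<phi> \<Longrightarrow>
    derh L n (add_mset d (succ_ctx L k \<Gamma>)) \<psi> \<Longrightarrow> derh L (Suc n) (add_mset x \<Gamma>) \<phi>"

lemma derh_mono: "derh L n \<Gamma> \<phi> \<Longrightarrow> n \<le> m \<Longrightarrow> derh L m \<Gamma> \<phi>"
proof (induction arbitrary: m rule: derh.induct)
  case (literal \<phi> \<Gamma> n)
  then show ?case by (blast intro: derh.literal)
next
  case (left x n \<Gamma> \<phi>)
  then show ?case by (cases m) (auto intro: derh.left)
next
  case (imp_left n a b \<Gamma> \<phi>)
  then show ?case by (cases m) (auto intro: derh.imp_left)
next
  case (right ps \<phi> n \<Gamma>)
  then show ?case by (cases m) (auto intro!: derh.right)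
next
  case (nec \<psi> k \<phi> n \<Gamma>)
  then show ?case by (cases m) (auto intro: derh.nec)
next
  case (poss d k x \<psi> \<phi> n \<Gamma>)
  then show ?case by (cases m) (auto intro: derh.poss)
qed

lemma derh_weaken: "derh L n \<Gamma> \<phi> \<Longrightarrow> derh L n (\<Gamma> + \<Delta>) \<phi>"
proof (induction arbitrary: \<Delta> rule: derh.induct)
  case (literal \<phi> \<Gamma> n)
  then show ?case by (simp add: derh.literal)
next
  case (left x n \<Gamma> \<phi>)
  then show ?case using derh.left[of x L n "\<Gamma> + \<Delta>"] by (simp add: add.assoc)
next
  case (imp_left n a b \<Gamma> \<phi>)
  then show ?case using derh.imp_left[of L n a b "\<Gamma> + \<Delta>"] by simp
next
  case (right ps \<phi> n \<Gamma>)
  then show ?case using derh.right[of ps \<phi> L n "\<Gamma> + \<Delta>"] by (fastforce simp: add.assoc)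
next
  case (nec \<psi> k \<phi> n \<Gamma>)
  then show ?case using derh.nec[of \<psi> L k \<phi> n "\<Gamma> + \<Delta>"] by simp
next
  case (poss d k x \<psi> \<phi> n \<Gamma>)
  then show ?case using derh.poss[of d L k x \<psi> \<phi> n "\<Gamma> + \<Delta>"] by simp
qed

(* Of the left rule for Imp a b only the right premise is an inversion. *)
definition left_inversions :: "fm \<Rightarrow> fm multiset set" where
  "left_inversions x = (case x of Imp a b \<Rightarrow> {{#b#}} | _ \<Rightarrow> set (left_prems x))"

lemma left_inversions_left_prems:
  "left_prems x \<noteq> [] \<Longrightarrow> left_inversions x = set (left_prems x)"
  by (cases x rule: left_prems.cases) (auto simp: left_inversions_def)

lemma left_inversions_nonmodal:
  "M \<in> left_inversions x \<Longrightarrow> \<not> is_literal x \<and> nec_body L k x = {#} \<and> poss_body L k x = {#}"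
  by (cases x rule: left_prems.cases) (auto simp: left_inversions_def)

lemma succ_ctx_diff_inversion:
  "M \<in> left_inversions x \<Longrightarrow> succ_ctx L k (\<Gamma> - {#x#}) = succ_ctx L k \<Gamma>"
  by (simp add: succ_ctx_diff_nonnec left_inversions_nonmodal)

lemma union_diff_single_left_commute:
  "x \<in># \<Gamma> \<Longrightarrow> M + (M' + \<Gamma> - {#x#}) = M' + (M + (\<Gamma> - {#x#}))"
  by (subst diff_union_single_conv) (simp_all add: add.left_commute)

lemma derh_invert:
  "derh L n \<Gamma> \<phi> \<Longrightarrow> x \<in># \<Gamma> \<Longrightarrow> M \<in> left_inversions x \<Longrightarrow> derh L n (M + (\<Gamma> - {#x#})) \<phi>"
proof (induction rule: derh.induct)
  case (literal \<phi> \<Gamma> n)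
  then have "\<phi> \<noteq> x" using left_inversions_nonmodal by blast
  with literal show ?case by (auto intro: derh.literal simp: in_diff_count)
next
  case (left y n \<Gamma> \<phi>)
  show ?case
  proof (cases "y = x")
    case True
    then have "derh L n (M + \<Gamma>) \<phi>"
      using left.IH left.prems(2) left.hyps(1) by (simp add: left_inversions_left_prems)
    then have "derh L (Suc n) (M + \<Gamma>) \<phi>" by (rule derh_mono) simp
    then show ?thesis using True by simp
  next
    case False
    with left.prems have x: "x \<in># \<Gamma>" by simp
    have "derh L n (M' + (M + (\<Gamma> - {#x#}))) \<phi>" if "M' \<in> set (left_prems y)" for M'
    proof -
      have "derh L n (M + (M' + \<Gamma> - {#x#})) \<phi>"
        using left.IH that x left.prems(2) by simp
      then show ?thesis using union_diff_single_left_commute[OF x] by metis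
    qed
    then show ?thesis
      using derh.left[of y L n "M + (\<Gamma> - {#x#})"] left.hyps x by simp
  qed
next
  case (imp_left n a b \<Gamma> \<phi>)
  show ?case
  proof (cases "x = Imp a b")
    case True
    then show ?thesis
      using imp_left.hyps(2) imp_left.prems(2) derh_mono by (fastforce simp: left_inversions_def)
  next
    case False
    with imp_left.prems have "x \<in># \<Gamma>" by simp
    with imp_left.IH imp_left.prems(2) show ?thesis
      using derh.imp_left[of L n a b "M + (\<Gamma> - {#x#})"] by simp
  qed
next
  case (right ps \<phi> n \<Gamma>)
  have "derh L n (M' + (M + (\<Gamma> - {#x#}))) \<psi>" if "(M', \<psi>) \<in> set ps" for M' \<psi>
  proof -
    have "derh L n (M + (M' + \<Gamma> - {#x#})) \<psi>"
      using right.IH that right.prems by fastforce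
    then show ?thesis using union_diff_single_left_commute[OF right.prems(1)] by metis
  qed
  then show ?case using derh.right[OF right.hyps(1)] by fast
next
  case (nec \<psi> k \<phi> n \<Gamma>)
  have "derh L n (succ_ctx L k (M + (\<Gamma> - {#x#}))) \<psi>"
    using derh_weaken[OF nec.hyps(2), of "succ_ctx L k M"]
    by (simp add: succ_ctx_diff_inversion[OF nec.prems(2)] add.commute)
  then show ?case by (rule derh.nec[OF nec.hyps(1)])
next
  case (poss d k y \<psi> \<phi> n \<Gamma>)
  have "x \<noteq> y" using poss.hyps(1) poss.prems(2) left_inversions_nonmodal by fastforce
  with poss.prems have "x \<in># \<Gamma>" by simp
  have "derh L n (add_mset d (succ_ctx L k (M + (\<Gamma> - {#x#})))) \<psi>"
    using derh_weaken[OF poss.hyps(3), of "succ_ctx L k M"]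
    by (simp add: succ_ctx_diff_inversion[OF poss.prems(2)] add.commute)
  then show ?case
    using derh.poss[OF poss.hyps(1,2)] \<open>x \<in># \<Gamma>\<close> \<open>x \<noteq> y\<close> by simp
qed

lemma derh_absorb_inversion:
  assumes set_mono: "\<And>\<Gamma> \<Delta> \<phi>. derh L m \<Gamma> \<phi> \<Longrightarrow> set_mset \<Gamma> \<subseteq> set_mset \<Delta> \<Longrightarrow> derh L m \<Delta> \<phi>"
    and "derh L m (M + \<Delta>) \<phi>" "x \<in># \<Delta>" "M \<in> left_inversions x"
  shows "derh L m (M + (\<Delta> - {#x#})) \<phi>"
proof -
  have "M + \<Delta> - {#x#} = M + (\<Delta> - {#x#})"
    using assms(3) by (rule diff_union_single_conv)
  then have "derh L m (M + (M + (\<Delta> - {#x#}))) \<phi>"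
    using derh_invert[OF assms(2) _ assms(4)] assms(3) by simp
  then show ?thesis by (rule set_mono) auto
qed

(* Weakening and contraction at once, by induction on the height. For a left rule the
   principal formula x remains in the enlarged context; it is removed by inverting x and
   contracting the duplicated components, both at the height of the premises. *)
lemma derh_set_mono:
  "derh L n \<Gamma> \<phi> \<Longrightarrow> set_mset \<Gamma> \<subseteq> set_mset \<Delta> \<Longrightarrow> derh L n \<Delta> \<phi>"
proof (induction n arbitrary: \<Gamma> \<Delta> \<phi> rule: less_induct)
  case (less n)
  from less.prems(1) show ?case
  proof cases
    case literal
    then show ?thesis using less.prems(2) by (auto intro: derh.literal)
  next
    case (left x m \<Gamma>')
    have IH: "\<And>\<Gamma> \<Delta> \<phi>. derh L m \<Gamma> \<phi> \<Longrightarrow> set_mset \<Gamma> \<subseteq> set_mset \<Delta> \<Longrightarrow> derh L m \<Delta> \<phi>"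
      using less.IH left(1) by blast
    have x: "x \<in># \<Delta>" using left(2) less.prems(2) by auto
    have "derh L m (M + (\<Delta> - {#x#})) \<phi>" if M: "M \<in> set (left_prems x)" for M
    proof -
      have M\<Delta>: "derh L m (M + \<Delta>) \<phi>"
        using IH[of "M + \<Gamma>'" \<phi> "M + \<Delta>"] left(2,4) M less.prems(2) by auto
      show ?thesis
        using derh_absorb_inversion[OF IH M\<Delta> x] left(3) M by (simp add: left_inversions_left_prems)
    qed
    then have "derh L (Suc m) (add_mset x (\<Delta> - {#x#})) \<phi>"
      using derh.left left(3) by blast
    with left(1,2) x show ?thesis by simp
  next
    case (imp_left m a b \<Gamma>')
    have IH: "\<And>\<Gamma> \<Delta> \<phi>. derh L m \<Gamma> \<phi> \<Longrightarrow> set_mset \<Gamma> \<subseteq> set_mset \<Delta> \<Longrightarrow> derh L m \<Delta> \<phi>"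
      using less.IH imp_left(1) by blast
    have x: "Imp a b \<in># \<Delta>" using imp_left(2) less.prems(2) by auto
    then obtain \<Delta>' where \<Delta>: "\<Delta> = add_mset (Imp a b) \<Delta>'" by (blast dest: multi_member_split)
    have "derh L m \<Delta> a"
      using IH imp_left(2,3) less.prems(2) by auto
    moreover have "derh L m ({#b#} + \<Delta>) \<phi>"
      using IH[of "add_mset b \<Gamma>'" \<phi> "add_mset b \<Delta>"] imp_left(2,4) less.prems(2) by auto
    then have "derh L m ({#b#} + (\<Delta> - {#Imp a b#})) \<phi>"
      using derh_absorb_inversion[OF IH _ x] by (simp add: left_inversions_def)
    ultimately show ?thesis
      using derh.imp_left imp_left(1) \<Delta> by simp
  next
    case (right ps m)
    have "derh L m (M + \<Delta>) \<psi>" if "(M, \<psi>) \<in> set ps" for M \<psi>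
      using less.IH[of m "M + \<Gamma>" \<psi> "M + \<Delta>"] right(1,3) that less.prems(2) by fastforce
    then show ?thesis using derh.right[OF right(2)] right(1) by fast
  next
    case (nec \<psi> k m)
    then show ?thesis
      using less.IH[of m] set_succ_ctx_mono[OF less.prems(2)] derh.nec by blast
  next
    case (poss d k x \<psi> m \<Gamma>')
    have x: "x \<in># \<Delta>" using poss(2) less.prems(2) by auto
    have "set_mset (succ_ctx L k \<Gamma>') \<subseteq> set_mset (succ_ctx L k (\<Delta> - {#x#}))"
      using set_succ_ctx_mono[of \<Gamma>' \<Delta>] less.prems(2) poss(2)
        succ_ctx_diff_nonnec[OF poss_body_nec_body_empty[OF poss(3)]] by auto
    then have "derh L m (add_mset d (succ_ctx L k (\<Delta> - {#x#}))) \<psi>"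
      using less.IH[of m] poss(1,5) by (metis insert_mono set_mset_add_mset_insert lessI)
    then have "derh L (Suc m) (add_mset x (\<Delta> - {#x#})) \<phi>"
      using derh.poss poss(3,4) by blast
    with poss(1,2) x show ?thesis by simp
  qed
qed

lemma derh_imp_der: "derh L n \<Gamma> \<phi> \<Longrightarrow> der L \<Gamma> \<phi>"
proof (induction rule: derh.induct)
  case (right ps \<phi> n \<Gamma>)
  then show ?case by (fastforce intro: der_right_rule)
qed (auto intro: der_literal der_left_rule der.impl der_nec_rule der_poss_rule)

lemma derh_common_height:
  "\<forall>(\<Gamma>, \<phi>)\<in>set ps. \<exists>n. derh L n \<Gamma> \<phi> \<Longrightarrow> \<exists>n. \<forall>(\<Gamma>, \<phi>)\<in>set ps. derh L n \<Gamma> \<phi>"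
proof (induction ps)
  case (Cons p ps)
  obtain n where n: "\<forall>(\<Gamma>, \<phi>)\<in>set ps. derh L n \<Gamma> \<phi>" using Cons by auto
  obtain m where m: "derh L m (fst p) (snd p)" using Cons.prems by auto
  have "\<forall>(\<Gamma>, \<phi>)\<in>set (p # ps). derh L (max m n) \<Gamma> \<phi>"
    using n m derh_mono[of L _ _ _ "max m n"] by fastforce
  then show ?case by blast
qed simp

lemma ex_derh_left:
  assumes "left_prems x \<noteq> []" and "\<forall>M\<in>set (left_prems x). \<exists>n. derh L n (M + \<Gamma>) \<phi>"
  shows "\<exists>n. derh L n (add_mset x \<Gamma>) \<phi>"
proof -
  obtain n where "\<forall>M\<in>set (left_prems x). derh L n (M + \<Gamma>) \<phi>"
    using derh_common_height[of "map (\<lambda>M. (M + \<Gamma>, \<phi>)) (left_prems x)" L] assms(2) by auto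
  then show ?thesis using derh.left[OF assms(1)] by blast
qed

lemma ex_derh_right:
  assumes "\<exists>ps\<in>set (right_prems \<phi>). \<forall>(M, \<psi>)\<in>set ps. \<exists>n. derh L n (M + \<Gamma>) \<psi>"
  shows "\<exists>n. derh L n \<Gamma> \<phi>"
proof -
  obtain ps n where "ps \<in> set (right_prems \<phi>)" "\<forall>(M, \<psi>)\<in>set ps. derh L n (M + \<Gamma>) \<psi>"
    using derh_common_height[of "map (\<lambda>(M, \<psi>). (M + \<Gamma>, \<psi>)) _" L] assms by fastforce
  then show ?thesis using derh.right by blast
qed

lemma ex_derh_modal:
  "\<exists>k. \<exists>\<psi>\<in>#nec_body L k \<phi>. \<exists>n. derh L n (succ_ctx L k \<Gamma>) \<psi> \<Longrightarrow> \<exists>n. derh L n \<Gamma> \<phi>"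
  "\<exists>k. \<exists>d\<in>#poss_body L k x. \<exists>\<psi>\<in>#poss_body L k \<phi>. \<exists>n. derh L n (add_mset d (succ_ctx L k \<Gamma>)) \<psi>
    \<Longrightarrow> \<exists>n. derh L n (add_mset x \<Gamma>) \<phi>"
  using derh.nec derh.poss by blast+

lemma der_imp_derh: "der L \<Gamma> \<phi> \<Longrightarrow> \<exists>n. derh L n \<Gamma> \<phi>"
proof (induction rule: der.induct)
  case (impl a b \<Gamma> c)
  then show ?case
    using derh_common_height[of "[(add_mset (Imp a b) \<Gamma>, a), (add_mset b \<Gamma>, c)]" L]
    by (auto intro: derh.imp_left)
qed ((rule exI, rule derh.literal; simp; fail)
  | (rule ex_derh_left; simp; fail)
  | (rule ex_derh_right; simp; fail)
  | (rule ex_derh_modal; auto simp: succ_ctx_eq; fail))+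

lemma der_set_mono: "der L \<Gamma> \<phi> \<Longrightarrow> set_mset \<Gamma> \<subseteq> set_mset \<Delta> \<Longrightarrow> der L \<Delta> \<phi>"
  using der_imp_derh derh_set_mono derh_imp_der by blast

section \<open>Derivability from sets of formulas\<close>

definition proves :: "logic \<Rightarrow> fm set \<Rightarrow> fm \<Rightarrow> bool" where
  "proves L X \<phi> \<longleftrightarrow> (\<exists>\<Gamma>. set_mset \<Gamma> \<subseteq> X \<and> der L \<Gamma> \<phi>)"

lemma proves_mono: "proves L X \<phi> \<Longrightarrow> X \<subseteq> Y \<Longrightarrow> proves L Y \<phi>"
  unfolding proves_def by blast

lemma proves_set_mset: "proves L (set_mset \<Gamma>) \<phi> \<longleftrightarrow> der L \<Gamma> \<phi>"
proof
  assume "proves L (set_mset \<Gamma>) \<phi>"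
  then obtain \<Delta> where "der L \<Delta> \<phi>" "set_mset \<Delta> \<subseteq> set_mset \<Gamma>" unfolding proves_def by blast
  then show "der L \<Gamma> \<phi>" by (rule der_set_mono)
next
  assume "der L \<Gamma> \<phi>"
  then show "proves L (set_mset \<Gamma>) \<phi>" unfolding proves_def by blast
qed

lemma proves_common_ctx:
  "\<forall>(M, \<psi>)\<in>set ps. proves L (set_mset M \<union> X) \<psi> \<Longrightarrow>
    \<exists>\<Gamma>. set_mset \<Gamma> \<subseteq> X \<and> (\<forall>(M, \<psi>)\<in>set ps. der L (M + \<Gamma>) \<psi>)"
proof (induction ps)
  case (Cons p ps)
  obtain \<Gamma> where \<Gamma>: "set_mset \<Gamma> \<subseteq> X" "\<forall>(M, \<psi>)\<in>set ps. der L (M + \<Gamma>) \<psi>"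
    using Cons by auto
  obtain \<Gamma>' where \<Gamma>': "set_mset \<Gamma>' \<subseteq> set_mset (fst p) \<union> X" "der L \<Gamma>' (snd p)"
    using Cons.prems by (auto simp: proves_def)
  define \<Delta> where "\<Delta> = \<Gamma> + filter_mset (\<lambda>y. y \<in> X) \<Gamma>'"
  have "der L (fst p + \<Delta>) (snd p)"
    using \<Gamma>'(2) by (rule der_set_mono) (use \<Gamma>'(1) in \<open>auto simp: \<Delta>_def\<close>)
  moreover have "der L (M + \<Delta>) \<psi>" if "(M, \<psi>) \<in> set ps" for M \<psi>
    using \<Gamma>(2) that by (auto simp: \<Delta>_def elim!: der_set_mono)
  moreover have "set_mset \<Delta> \<subseteq> X" using \<Gamma>(1) by (auto simp: \<Delta>_def)
  ultimately show ?case by (cases p) auto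
qed (auto intro: exI[of _ "{#}"])

lemma proves_left:
  assumes "left_prems x \<noteq> []" and "\<forall>M\<in>set (left_prems x). proves L (set_mset M \<union> X) \<phi>"
  shows "proves L (insert x X) \<phi>"
proof -
  obtain \<Gamma> where "set_mset \<Gamma> \<subseteq> X" "\<forall>M\<in>set (left_prems x). der L (M + \<Gamma>) \<phi>"
    using proves_common_ctx[of "map (\<lambda>M. (M, \<phi>)) (left_prems x)" L X] assms(2) by auto
  then show ?thesis
    using der_left_rule[OF assms(1)] unfolding proves_def by (metis insert_mono set_mset_add_mset_insert)
qed

lemma proves_right:
  assumes "ps \<in> set (right_prems \<phi>)" and "\<forall>(M, \<psi>)\<in>set ps. proves L (set_mset M \<union> X) \<psi>"
  shows "proves L X \<phi>"
  using proves_common_ctx[OF assms(2)] der_right_rule[OF assms(1)] unfolding proves_def by blast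

lemma proves_imp_left:
  assumes "Imp a b \<in> X" and "proves L X a" and "proves L (insert b X) \<phi>"
  shows "proves L X \<phi>"
proof -
  have "\<forall>(M, \<psi>)\<in>set [({#Imp a b#}, a), ({#b#}, \<phi>)]. proves L (set_mset M \<union> X) \<psi>"
    using assms by (auto elim: proves_mono)
  from proves_common_ctx[OF this] obtain \<Gamma> where
    "set_mset \<Gamma> \<subseteq> X" "der L (add_mset (Imp a b) \<Gamma>) a" "der L (add_mset b \<Gamma>) \<phi>"
    by auto
  then show ?thesis using der.impl assms(1) unfolding proves_def
    by (metis insert_subset set_mset_add_mset_insert)
qed

definition succ_theory :: "logic \<Rightarrow> modal_rel \<Rightarrow> fm set \<Rightarrow> fm set" where
  "succ_theory L k X = {\<psi>. \<exists>x\<in>X. \<psi> \<in># nec_body L k x}"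

lemma succ_theory_lift:
  "set_mset G \<subseteq> succ_theory L k X \<Longrightarrow>
    \<exists>\<Gamma>. set_mset \<Gamma> \<subseteq> X \<and> set_mset G \<subseteq> set_mset (succ_ctx L k \<Gamma>)"
proof (induction G)
  case (add \<psi> G)
  then obtain \<Gamma> where \<Gamma>: "set_mset \<Gamma> \<subseteq> X" "set_mset G \<subseteq> set_mset (succ_ctx L k \<Gamma>)"
    by auto
  obtain x where x: "x \<in> X" "\<psi> \<in># nec_body L k x"
    using add.prems by (auto simp: succ_theory_def)
  have "set_mset (add_mset \<psi> G) \<subseteq> set_mset (succ_ctx L k (add_mset x \<Gamma>))"
    using \<Gamma>(2) x(2) by auto
  moreover have "set_mset (add_mset x \<Gamma>) \<subseteq> X" using \<Gamma>(1) x(1) by simp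
  ultimately show ?case by blast
qed (auto intro: exI[of _ "{#}"])

lemma proves_nec:
  assumes "\<psi> \<in># nec_body L k \<phi>" and "proves L (succ_theory L k X) \<psi>"
  shows "proves L X \<phi>"
proof -
  obtain G \<Gamma> where "der L G \<psi>" "set_mset \<Gamma> \<subseteq> X" "set_mset G \<subseteq> set_mset (succ_ctx L k \<Gamma>)"
    using assms(2) succ_theory_lift unfolding proves_def by meson
  then show ?thesis
    using der_nec_rule[OF assms(1)] der_set_mono unfolding proves_def by blast
qed

lemma proves_poss:
  assumes "d \<in># poss_body L k x" "x \<in> X" "\<psi> \<in># poss_body L k \<phi>"
    and "proves L (insert d (succ_theory L k X)) \<psi>"
  shows "proves L X \<phi>"
proof -
  obtain G where G: "set_mset G \<subseteq> insert d (succ_theory L k X)" "der L G \<psi>"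
    using assms(4) unfolding proves_def by blast
  have "set_mset (filter_mset (\<lambda>y. y \<noteq> d) G) \<subseteq> succ_theory L k X" using G(1) by auto
  then obtain \<Gamma> where \<Gamma>: "set_mset \<Gamma> \<subseteq> X"
    "set_mset (filter_mset (\<lambda>y. y \<noteq> d) G) \<subseteq> set_mset (succ_ctx L k \<Gamma>)"
    using succ_theory_lift by blast
  have "der L (add_mset d (succ_ctx L k \<Gamma>)) \<psi>"
    using G(2) by (rule der_set_mono) (use \<Gamma>(2) in auto)
  then have "der L (add_mset x \<Gamma>) \<phi>" by (rule der_poss_rule[OF assms(1,3)])
  then show ?thesis using \<Gamma>(1) assms(2) unfolding proves_def
    by (metis insert_subset set_mset_add_mset_insert)
qed

definition maximal_unproving :: "logic \<Rightarrow> fm \<Rightarrow> fm set \<Rightarrow> bool" where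
  "maximal_unproving L \<phi> Y \<longleftrightarrow> \<not> proves L Y \<phi> \<and> (\<forall>\<psi>. \<psi> \<notin> Y \<longrightarrow> proves L (insert \<psi> Y) \<phi>)"

lemma lindenbaum:
  assumes "\<not> proves L X \<phi>"
  shows "\<exists>Y. X \<subseteq> Y \<and> maximal_unproving L \<phi> Y"
proof -
  let ?A = "{Y. X \<subseteq> Y \<and> \<not> proves L Y \<phi>}"
  have "\<exists>Y\<in>?A. \<forall>Z\<in>?A. Y \<subseteq> Z \<longrightarrow> Z = Y"
  proof (rule subset_Zorn_nonempty)
    show "?A \<noteq> {}" using assms by blast
  next
    fix C assume C: "C \<noteq> {}" "subset.chain ?A C"
    have "\<not> proves L (\<Union>C) \<phi>"
    proof
      assume "proves L (\<Union>C) \<phi>"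
      then obtain \<Gamma> where \<Gamma>: "set_mset \<Gamma> \<subseteq> \<Union>C" "der L \<Gamma> \<phi>" unfolding proves_def by blast
      obtain B where "B \<in> C" "set_mset \<Gamma> \<subseteq> B"
        using finite_subset_Union_chain[OF _ \<Gamma>(1) C] by blast
      then have "proves L B \<phi>" "B \<in> ?A"
        using \<Gamma>(2) C(2) unfolding proves_def subset_chain_def by auto
      then show False by blast
    qed
    moreover have "X \<subseteq> \<Union>C" using C unfolding subset_chain_def by blast
    ultimately show "\<Union>C \<in> ?A" by blast
  qed
  then obtain Y where "Y \<in> ?A" and "\<forall>Z\<in>?A. Y \<subseteq> Z \<longrightarrow> Z = Y" by blast
  then show ?thesis unfolding maximal_unproving_def by blast
qed

(* UNIV is the theory of a world supporting everything; it is the successor used where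
   nothing has to be refuted. *)
definition canonical_theory :: "logic \<Rightarrow> fm set \<Rightarrow> bool" where
  "canonical_theory L Y \<longleftrightarrow> Y = UNIV \<or> (\<exists>\<phi>. maximal_unproving L \<phi> Y)"

lemma canonical_theory_left:
  assumes "canonical_theory L Y" "x \<in> Y" "left_prems x \<noteq> []"
  shows "\<exists>M\<in>set (left_prems x). set_mset M \<subseteq> Y"
proof (rule ccontr)
  assume none: "\<not> ?thesis"
  with assms(3) have "Y \<noteq> UNIV" by (cases "left_prems x") auto
  with assms(1) obtain \<phi> where \<phi>: "maximal_unproving L \<phi> Y"
    unfolding canonical_theory_def by blast
  have "proves L (set_mset M \<union> Y) \<phi>" if "M \<in> set (left_prems x)" for M
  proof -
    have "\<not> set_mset M \<subseteq> Y" using none that by blast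
    then obtain m where "m \<in># M" "m \<notin> Y" by auto
    then have "proves L (insert m Y) \<phi>" using \<phi> unfolding maximal_unproving_def by blast
    then show ?thesis by (rule proves_mono) (use \<open>m \<in># M\<close> in auto)
  qed
  then have "proves L (insert x Y) \<phi>" using proves_left[OF assms(3)] by blast
  with assms(2) \<phi> show False unfolding maximal_unproving_def by (simp add: insert_absorb)
qed

lemma canonical_theory_imp:
  assumes "canonical_theory L Y" "Imp a b \<in> Y" "proves L Y a"
  shows "b \<in> Y"
proof (rule ccontr)
  assume "b \<notin> Y"
  with assms(1) obtain \<phi> where "maximal_unproving L \<phi> Y" "proves L (insert b Y) \<phi>"
    unfolding canonical_theory_def maximal_unproving_def by auto
  with assms(2,3) show False
    using proves_imp_left unfolding maximal_unproving_def by blast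
qed

section \<open>The canonical model\<close>

definition refutable :: "logic \<Rightarrow> fm set \<Rightarrow> fm \<Rightarrow> bool" where
  "refutable L Y \<chi> \<longleftrightarrow> (\<forall>k e. e \<in># poss_body L k \<chi> \<longrightarrow>
     (\<forall>x\<in>Y. \<forall>d. d \<in># poss_body L k x \<longrightarrow> \<not> proves L (insert d (succ_theory L k Y)) e))"

lemma unprovable_refutable: "\<not> proves L Y \<chi> \<Longrightarrow> refutable L Y \<chi>"
  using proves_poss unfolding refutable_def by blast

(* Validity quantifies over models with worlds of type fm set set, so the world made of a
   theory Y and an optional refuted formula g is coded injectively as a singleton. *)
definition world :: "fm set \<Rightarrow> fm option \<Rightarrow> fm set set" where
  "world Y g = {Box ` Y \<union> Dia ` set_option g}"

definition theory_of :: "fm set set \<Rightarrow> fm set" where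
  "theory_of u = {a. Box a \<in> \<Union>u}"

definition refuted_of :: "fm set set \<Rightarrow> fm set" where
  "refuted_of u = {a. Dia a \<in> \<Union>u}"

lemma theory_of_world [simp]: "theory_of (world Y g) = Y"
  by (auto simp: theory_of_def world_def)

lemma refuted_of_world [simp]: "refuted_of (world Y g) = set_option g"
  by (auto simp: refuted_of_def world_def)

definition worlds :: "logic \<Rightarrow> fm set set set" where
  "worlds L = {world Y g | Y g. canonical_theory L Y \<and> (\<forall>\<chi>\<in>set_option g. refutable L Y \<chi>)}"

definition can_le :: "logic \<Rightarrow> fm set set \<Rightarrow> fm set set \<Rightarrow> bool" where
  "can_le L u v \<longleftrightarrow> u \<in> worlds L \<and> v \<in> worlds L \<and> theory_of u \<subseteq> theory_of v"

definition can_rel :: "logic \<Rightarrow> modal_rel \<Rightarrow> fm set set \<Rightarrow> fm set set \<Rightarrow> bool" where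
  "can_rel L k u v \<longleftrightarrow> u \<in> worlds L \<and> v \<in> worlds L
     \<and> succ_theory L k (theory_of u) \<subseteq> theory_of v
     \<and> (\<forall>\<chi>\<in>refuted_of u. \<forall>e. e \<in># poss_body L k \<chi> \<longrightarrow> \<not> proves L (theory_of v) e)"

definition canonical_model :: "logic \<Rightarrow> fm set set model" where
  "canonical_model L = \<lparr>W = worlds L, le = can_le L,
     RBp = can_rel L (rel_rep L Box_pos), RBm = can_rel L (rel_rep L Box_neg),
     RDp = can_rel L (rel_rep L Dia_pos), RDm = can_rel L (rel_rep L Dia_neg),
     vp = (\<lambda>p. {u \<in> worlds L. Atom p \<in> theory_of u}),
     vm = (\<lambda>p. {u \<in> worlds L. Neg (Atom p) \<in> theory_of u})\<rparr>"

lemma canonical_model_simps [simp]: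
  "W (canonical_model L) = worlds L" "le (canonical_model L) = can_le L"
  "RBp (canonical_model L) = can_rel L (rel_rep L Box_pos)"
  "RBm (canonical_model L) = can_rel L (rel_rep L Box_neg)"
  "RDp (canonical_model L) = can_rel L (rel_rep L Dia_pos)"
  "RDm (canonical_model L) = can_rel L (rel_rep L Dia_neg)"
  "vp (canonical_model L) p = {u \<in> worlds L. Atom p \<in> theory_of u}"
  "vm (canonical_model L) p = {u \<in> worlds L. Neg (Atom p) \<in> theory_of u}"
  by (simp_all add: canonical_model_def)

lemma world_in_worlds:
  "canonical_theory L Y \<Longrightarrow> \<forall>\<chi>\<in>set_option g. refutable L Y \<chi> \<Longrightarrow> world Y g \<in> worlds L"
  unfolding worlds_def by blast

lemma worlds_canonical_theory: "u \<in> worlds L \<Longrightarrow> canonical_theory L (theory_of u)"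
  unfolding worlds_def by auto

lemma canonical_model_is_model: "is_model (canonical_model L)"
proof -
  have "world UNIV None \<in> worlds L" by (simp add: canonical_theory_def world_in_worlds)
  then show ?thesis unfolding is_model_def is_frame_def by (auto simp: can_le_def can_rel_def)
qed

lemma canonical_model_in_class: "in_class L (canonical_model L)"
  by (cases L) (simp_all add: in_class_def)

lemma extend_to_world:
  assumes "\<not> proves L X \<phi>"
  shows "\<exists>v\<in>worlds L. X \<subseteq> theory_of v \<and> \<not> proves L (theory_of v) \<phi>"
proof -
  obtain Y where "X \<subseteq> Y" "maximal_unproving L \<phi> Y" using lindenbaum[OF assms] by blast
  moreover have "world Y None \<in> worlds L"
    using \<open>maximal_unproving L \<phi> Y\<close> by (intro world_in_worlds) (auto simp: canonical_theory_def)
  ultimately show ?thesis unfolding maximal_unproving_def by force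
qed

lemma poss_witness:
  assumes "w \<in> worlds L" "x \<in> theory_of w" "d \<in># poss_body L k x"
  shows "\<exists>v\<in>worlds L. can_rel L k w v \<and> d \<in> theory_of v"
proof (cases "\<exists>\<chi>\<in>refuted_of w. \<exists>e. e \<in># poss_body L k \<chi>")
  case True
  obtain Y g where w: "w = world Y g" "canonical_theory L Y" "\<forall>\<chi>\<in>set_option g. refutable L Y \<chi>"
    using assms(1) unfolding worlds_def by blast
  with True obtain \<chi> e where \<chi>: "g = Some \<chi>" "e \<in># poss_body L k \<chi>" by auto
  then have "\<not> proves L (insert d (succ_theory L k Y)) e"
    using w assms(2,3) unfolding refutable_def by auto
  then obtain v where "v \<in> worlds L" "insert d (succ_theory L k Y) \<subseteq> theory_of v"
    "\<not> proves L (theory_of v) e"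
    using extend_to_world by blast
  with w \<chi> assms(1) show ?thesis
    unfolding can_rel_def by (auto dest: poss_body_unique[OF \<chi>(2)])
next
  case False
  have "world UNIV None \<in> worlds L" by (simp add: canonical_theory_def world_in_worlds)
  with False assms(1) show ?thesis unfolding can_rel_def by force
qed

section \<open>Truth lemma and completeness\<close>

abbreviation canon_sat :: "logic \<Rightarrow> fm set set \<Rightarrow> fm \<Rightarrow> bool" where
  "canon_sat L u \<phi> \<equiv> sat (canonical_model L) True u \<phi>"

lemma sat_left_prems:
  "left_prems \<phi> \<noteq> [] \<Longrightarrow> sat M True w \<phi> \<longleftrightarrow> (\<exists>Ms\<in>set (left_prems \<phi>). \<forall>y\<in>#Ms. sat M True w y)"
  by (cases \<phi> rule: left_prems.cases) auto

lemma sat_right_prems: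
  "left_prems \<phi> \<noteq> [] \<Longrightarrow>
    sat M True w \<phi> \<longleftrightarrow> (\<exists>ps\<in>set (right_prems \<phi>). \<forall>(Ms, \<psi>)\<in>set ps. Ms = {#} \<and> sat M True w \<psi>)"
  by (cases \<phi> rule: left_prems.cases) auto

lemma canon_sat_nec:
  "\<psi> \<in># nec_body L k \<phi> \<Longrightarrow> canon_sat L u \<phi> \<longleftrightarrow>
    (\<forall>w\<in>worlds L. can_le L u w \<longrightarrow> (\<forall>v\<in>worlds L. can_rel L k w v \<longrightarrow> canon_sat L v \<psi>))"
  by (auto simp: mem_nec_body)

lemma canon_sat_poss:
  "\<psi> \<in># poss_body L k \<phi> \<Longrightarrow> canon_sat L u \<phi> \<longleftrightarrow>
    (\<forall>w\<in>worlds L. can_le L u w \<longrightarrow> (\<exists>v\<in>worlds L. can_rel L k w v \<and> canon_sat L v \<psi>))"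
  by (auto simp: mem_poss_body)

definition faithful :: "logic \<Rightarrow> fm \<Rightarrow> bool" where
  "faithful L \<phi> \<longleftrightarrow> (\<forall>u\<in>worlds L. (\<phi> \<in> theory_of u \<longrightarrow> canon_sat L u \<phi>)
     \<and> (\<not> proves L (theory_of u) \<phi> \<longrightarrow> \<not> canon_sat L u \<phi>))"

lemma faithful_mem: "faithful L \<phi> \<Longrightarrow> u \<in> worlds L \<Longrightarrow> \<phi> \<in> theory_of u \<Longrightarrow> canon_sat L u \<phi>"
  unfolding faithful_def by blast

lemma faithful_proves:
  "faithful L \<phi> \<Longrightarrow> u \<in> worlds L \<Longrightarrow> canon_sat L u \<phi> \<Longrightarrow> proves L (theory_of u) \<phi>"
  unfolding faithful_def by blast

lemma faithful_literal:
  assumes "is_literal \<phi>"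
  shows "faithful L \<phi>"
proof -
  have "proves L X \<phi>" if "\<phi> \<in> X" for X
    unfolding proves_def using der_literal[OF assms, of "{#\<phi>#}" L] that
    by (intro exI[of _ "{#\<phi>#}"]) auto
  with assms show ?thesis
    unfolding faithful_def by (cases \<phi> rule: is_literal.cases) auto
qed

lemma faithful_decomposable:
  assumes "left_prems \<phi> \<noteq> []"
    and "\<forall>M\<in>set (left_prems \<phi>). \<forall>y\<in>#M. faithful L y"
    and "\<forall>ps\<in>set (right_prems \<phi>). \<forall>(M, \<psi>)\<in>set ps. faithful L \<psi>"
  shows "faithful L \<phi>"
  unfolding faithful_def
proof (intro ballI conjI impI)
  fix u assume u: "u \<in> worlds L" and "\<phi> \<in> theory_of u"
  then obtain M where M: "M \<in> set (left_prems \<phi>)" "set_mset M \<subseteq> theory_of u"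
    using canonical_theory_left[OF worlds_canonical_theory[OF u] _ assms(1)] by blast
  have "\<forall>y\<in>#M. canon_sat L u y"
    using faithful_mem[OF _ u] assms(2) M by blast
  then show "canon_sat L u \<phi>"
    using sat_left_prems[OF assms(1), of "canonical_model L" u] M(1) by blast
next
  fix u assume u: "u \<in> worlds L" and np: "\<not> proves L (theory_of u) \<phi>"
  show "\<not> canon_sat L u \<phi>"
  proof
    assume "canon_sat L u \<phi>"
    then obtain ps where ps: "ps \<in> set (right_prems \<phi>)"
      "\<forall>(M, \<psi>)\<in>set ps. M = {#} \<and> canon_sat L u \<psi>"
      using sat_right_prems[OF assms(1), of "canonical_model L" u] by blast
    have "proves L (set_mset M \<union> theory_of u) \<psi>" if "(M, \<psi>) \<in> set ps" for M \<psi>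
    proof -
      have "M = {#}" "canon_sat L u \<psi>" "faithful L \<psi>"
        using ps assms(3) that by fastforce+
      then show ?thesis using faithful_proves[OF _ u] by simp
    qed
    then show False using proves_right[OF ps(1)] np by blast
  qed
qed

lemma faithful_imp:
  assumes a: "faithful L a" and b: "faithful L b"
  shows "faithful L (Imp a b)"
  unfolding faithful_def
proof (intro ballI conjI impI)
  fix u assume u: "u \<in> worlds L" and imp: "Imp a b \<in> theory_of u"
  have "canon_sat L w b" if w: "w \<in> worlds L" "can_le L u w" "canon_sat L w a" for w
  proof -
    have "Imp a b \<in> theory_of w" using imp w(2) unfolding can_le_def by blast
    then have "b \<in> theory_of w"
      using canonical_theory_imp[OF worlds_canonical_theory[OF w(1)]] faithful_proves[OF a w(1,3)]
      by blast
    then show ?thesis using faithful_mem[OF b w(1)] by blast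
  qed
  then show "canon_sat L u (Imp a b)" by simp
next
  fix u assume u: "u \<in> worlds L" and np: "\<not> proves L (theory_of u) (Imp a b)"
  have "\<not> proves L (insert a (theory_of u)) b"
    using np proves_right[of "[({#a#}, b)]" "Imp a b" L "theory_of u"] by auto
  then obtain v where v: "v \<in> worlds L" "insert a (theory_of u) \<subseteq> theory_of v"
    "\<not> proves L (theory_of v) b"
    using extend_to_world by blast
  have "can_le L u v" using u v unfolding can_le_def by blast
  moreover have "canon_sat L v a" using faithful_mem[OF a v(1)] v(2) by blast
  moreover have "\<not> canon_sat L v b" using faithful_proves[OF b v(1)] v(3) by blast
  ultimately show "\<not> canon_sat L u (Imp a b)" using v(1) by auto
qed

lemma faithful_nec:
  assumes body: "\<psi> \<in># nec_body L k \<phi>" and \<psi>: "faithful L \<psi>"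
  shows "faithful L \<phi>"
  unfolding faithful_def canon_sat_nec[OF body]
proof (intro ballI conjI impI allI)
  fix u w v assume "\<phi> \<in> theory_of u" "can_le L u w" "can_rel L k w v" "v \<in> worlds L"
  then have "\<psi> \<in> theory_of v"
    using body unfolding can_le_def can_rel_def succ_theory_def by blast
  then show "canon_sat L v \<psi>" using faithful_mem[OF \<psi> \<open>v \<in> worlds L\<close>] by blast
next
  fix u assume u: "u \<in> worlds L" and np: "\<not> proves L (theory_of u) \<phi>"
  then have "\<not> proves L (succ_theory L k (theory_of u)) \<psi>" using proves_nec[OF body] by blast
  then obtain v where v: "v \<in> worlds L" "succ_theory L k (theory_of u) \<subseteq> theory_of v"
    "\<not> proves L (theory_of v) \<psi>"
    using extend_to_world by blast
  let ?w = "world (theory_of u) None"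
  have w: "?w \<in> worlds L" using worlds_canonical_theory[OF u] by (simp add: world_in_worlds)
  then have "can_le L u ?w" "can_rel L k ?w v" using u v unfolding can_le_def can_rel_def by auto
  moreover have "\<not> canon_sat L v \<psi>" using faithful_proves[OF \<psi> v(1)] v(3) by blast
  ultimately show "\<not> (\<forall>w\<in>worlds L. can_le L u w \<longrightarrow> (\<forall>v\<in>worlds L. can_rel L k w v \<longrightarrow> canon_sat L v \<psi>))"
    using w v(1) by blast
qed

lemma faithful_poss:
  assumes body: "\<psi> \<in># poss_body L k \<phi>" and \<psi>: "faithful L \<psi>"
  shows "faithful L \<phi>"
  unfolding faithful_def canon_sat_poss[OF body]
proof (intro ballI conjI impI)
  fix u w assume "\<phi> \<in> theory_of u" "w \<in> worlds L" "can_le L u w"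
  then obtain v where "v \<in> worlds L" "can_rel L k w v" "\<psi> \<in> theory_of v"
    using poss_witness[OF _ _ body] unfolding can_le_def by blast
  then show "\<exists>v\<in>worlds L. can_rel L k w v \<and> canon_sat L v \<psi>"
    using faithful_mem[OF \<psi>] by blast
next
  fix u assume u: "u \<in> worlds L" and np: "\<not> proves L (theory_of u) \<phi>"
  let ?w = "world (theory_of u) (Some \<phi>)"
  have w: "?w \<in> worlds L"
    using worlds_canonical_theory[OF u] unprovable_refutable[OF np] by (simp add: world_in_worlds)
  then have "can_le L u ?w" using u unfolding can_le_def by auto
  moreover have "\<not> canon_sat L v \<psi>" if "can_rel L k ?w v" for v
    using that body faithful_proves[OF \<psi>] unfolding can_rel_def by auto
  ultimately show "\<not> (\<forall>w\<in>worlds L. can_le L u w \<longrightarrow> (\<exists>v\<in>worlds L. can_rel L k w v \<and> canon_sat L v \<psi>))"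
    using w by blast
qed

lemma truth_lemma: "faithful L \<phi> \<and> faithful L (Neg \<phi>)"
proof (induction \<phi>)
  case (Atom p)
  then show ?case by (simp add: faithful_literal)
next
  case (Neg a)
  then show ?case using faithful_decomposable[of "Neg (Neg a)" L] by simp
next
  case (And a b)
  then show ?case
    using faithful_decomposable[of "And a b" L] faithful_decomposable[of "Neg (And a b)" L] by simp
next
  case (Or a b)
  then show ?case
    using faithful_decomposable[of "Or a b" L] faithful_decomposable[of "Neg (Or a b)" L] by simp
next
  case (Imp a b)
  then show ?case
    using faithful_imp[of L a b] faithful_decomposable[of "Neg (Imp a b)" L] by simp
next
  case (Box a)
  then show ?case
    using faithful_nec[of a L "rel_rep L Box_pos" "Box a"]
      faithful_poss[of "Neg a" L "rel_rep L Box_neg" "Neg (Box a)"] by simp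
next
  case (Dia a)
  then show ?case
    using faithful_poss[of a L "rel_rep L Dia_pos" "Dia a"]
      faithful_nec[of "Neg a" L "rel_rep L Dia_neg" "Neg (Dia a)"] by simp
qed

lemma sat_seq_fm:
  assumes "is_model M" "w \<in> W M" "sat M True w (seq_fm xs \<phi>)" "\<forall>x\<in>set xs. sat M True w x"
  shows "sat M True w \<phi>"
proof (cases "xs = []")
  case False
  have "sat M True w (conjs xs)"
    using False assms(4) by (induction xs rule: conjs.induct) auto
  moreover have "le M w w" using assms(1,2) unfolding is_model_def is_frame_def by blast
  ultimately show ?thesis using assms(2,3) False by (auto simp: seq_fm_def)
qed (use assms in \<open>simp add: seq_fm_def\<close>)

theorem theorem6:
  fixes L :: logic and xs :: "fm list" and \<phi> :: fm
  assumes "valid L (seq_fm xs \<phi>)"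
  shows "der L (mset xs) \<phi>"
proof (rule ccontr)
  assume "\<not> der L (mset xs) \<phi>"
  then have "\<not> proves L (set xs) \<phi>" using proves_set_mset[of L "mset xs" \<phi>] by simp
  then obtain v where v: "v \<in> worlds L" "set xs \<subseteq> theory_of v" "\<not> proves L (theory_of v) \<phi>"
    using extend_to_world by blast
  then have "\<forall>x\<in>set xs. canon_sat L v x" "\<not> canon_sat L v \<phi>"
    using truth_lemma faithful_mem faithful_proves by blast+
  moreover have "canon_sat L v (seq_fm xs \<phi>)"
    using assms canonical_model_is_model canonical_model_in_class v(1) unfolding valid_def by auto
  ultimately show False using sat_seq_fm canonical_model_is_model v(1) by fastforce
qed

end
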